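(* Let $m\in\mathbb{N}^+$ and $p\in(1,p_S)$. Then $$|u^{(m)}_p(x)|\leq \frac{M^{(m)}_{0,p}}{\Big[1+\frac{(M^{(m)}_{0,p})^{p-1}}{N(N-2)}|x|^2\Big]^{\frac{N-2}{2}}}\qquad\text{for all }x\in B^{(m)}_{0,p}.$$
   Context: Standing setting: $N\geq3$, $B$ unit ball of $\mathbb{R}^N$ centered at $0$, $p_S=\frac{N+2}{N-2}$. $u^{(m)}_p$ is the unique radial solution of $-\Delta u=|u|^{p-1}u$ in $B$, $u=0$ on $\partial B$, with exactly $m$ nodal regions and $u^{(m)}_p(0)>0$. $r^{(m)}_{1,p}$ is its first nodal radius if $m\geq2$ and $r^{(m)}_{1,p}=1$ if $m=1$; $B^{(m)}_{0,p}=\{|x|<r^{(m)}_{1,p}\}$; $M^{(m)}_{0,p}=u^{(m)}_p(0)=\max_{B^{(m)}_{0,p}}|u^{(m)}_p|$. *)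

theory Defs
  imports "HOL-Analysis.Analysis"
begin

definition C2_on :: "'a::euclidean_space set \<Rightarrow> ('a \<Rightarrow> real) \<Rightarrow> bool" where
  "C2_on S u \<longleftrightarrow> (\<exists>Du :: 'a \<Rightarrow> ('a \<Rightarrow>\<^sub>L real). \<exists>D2u :: 'a \<Rightarrow> ('a \<Rightarrow>\<^sub>L ('a \<Rightarrow>\<^sub>L real)).
      (\<forall>x\<in>S. (u has_derivative blinfun_apply (Du x)) (at x) \<and>
               (Du has_derivative blinfun_apply (D2u x)) (at x)) \<and>
      continuous_on S D2u)"

definition laplacian :: "('a::euclidean_space \<Rightarrow> real) \<Rightarrow> 'a \<Rightarrow> real" where
  "laplacian u x = (\<Sum>b\<in>Basis. deriv (\<lambda>t. deriv (\<lambda>s. u (x + s *\<^sub>R b)) t) 0)"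

definition lane_emden_dirichlet_sol :: "real \<Rightarrow> ('a::euclidean_space \<Rightarrow> real) \<Rightarrow> bool" where
  "lane_emden_dirichlet_sol p u \<longleftrightarrow>
     C2_on (ball 0 1) u \<and> continuous_on (cball 0 1) u \<and>
     (\<forall>x\<in>ball 0 1. - laplacian u x = \<bar>u x\<bar> powr (p - 1) * u x) \<and>
     (\<forall>x\<in>sphere 0 1. u x = 0)"

definition radial_on :: "'a::real_normed_vector set \<Rightarrow> ('a \<Rightarrow> real) \<Rightarrow> bool" where
  "radial_on S u \<longleftrightarrow> (\<forall>x\<in>S. \<forall>y\<in>S. norm x = norm y \<longrightarrow> u x = u y)"

definition nodal_regions :: "('a::euclidean_space \<Rightarrow> real) \<Rightarrow> 'a set set" where
  "nodal_regions u = components {x \<in> ball 0 1. u x \<noteq> 0}"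

text \<open>First nodal radius of a radial function (equals 1 if u has no zero in B).\<close>
definition first_nodal_radius :: "('a::euclidean_space \<Rightarrow> real) \<Rightarrow> real" where
  "first_nodal_radius u = Inf ({norm x | x. x \<in> ball 0 1 \<and> u x = 0} \<union> {1})"

end

theory Submission
  imports Defs
begin

text \<open>Along a coordinate ray the radial solution gives a profile \<open>v(r) = u(r e)\<close> with
  \<open>v'' + (N-1)/r v' = -v^p\<close>, \<open>v'(0) = 0\<close> and \<open>v > 0\<close> up to the first nodal radius.
  Then \<open>v' \<le> 0\<close>, and for subcritical \<open>p\<close> the Pohozaev function
  \<open>P = (N-2)/N r^N v^(p+1) + (N-2) r^(N-1) v v' + r^N v'^2\<close> increases from \<open>P(0) = 0\<close>.
  Nonnegativity of \<open>P\<close> makes \<open>w = -v' / (r v^(N/(N-2)))\<close> nondecreasing, so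
  \<open>w \<ge> w(0+) = v(0)^(p - N/(N-2)) / N\<close>. Since \<open>(v^(-2/(N-2)))' = 2/(N-2) r w\<close>, integrating gives
  \<open>v(r)^(-2/(N-2)) \<ge> v(0)^(-2/(N-2)) (1 + v(0)^(p-1) r^2 / (N(N-2)))\<close>, which is the bound.\<close>

section \<open>The radial Lane-Emden ODE\<close>

locale radial_lane_emden_ode =
  fixes n :: nat and p R :: real and v v' v'' :: "real \<Rightarrow> real"
  assumes dim_ge_3: "n \<ge> 3"
    and has_deriv: "\<And>t. 0 \<le> t \<Longrightarrow> t < R \<Longrightarrow> (v has_real_derivative v' t) (at t)"
    and has_deriv': "\<And>t. 0 \<le> t \<Longrightarrow> t < R \<Longrightarrow> (v' has_real_derivative v'' t) (at t)"
    and deriv_at_0: "v' 0 = 0"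
    and ode: "\<And>t. 0 < t \<Longrightarrow> t < R \<Longrightarrow> v'' t + (real n - 1) * v' t / t = - (v t powr p)"
    and positive: "\<And>t. 0 \<le> t \<Longrightarrow> t < R \<Longrightarrow> 0 < v t"
begin

lemma second_deriv_eq: "0 < t \<Longrightarrow> t < R \<Longrightarrow> v'' t = - (v t powr p) - (real n - 1) * v' t / t"
  using ode by (simp add: algebra_simps)

lemma power_dim_split: "x ^ (n - 1) = x ^ (n - 2) * x" "x ^ n = x ^ (n - 2) * x * x" for x :: real
proof -
  have "n = Suc (Suc (n - 2))" using dim_ge_3 by arith
  then show "x ^ (n - 1) = x ^ (n - 2) * x" "x ^ n = x ^ (n - 2) * x * x"
    by (metis diff_Suc_1 power_Suc2)+
qed

text \<open>The ODE reads \<open>(t^(n-1) v')' = -t^(n-1) v^p \<le> 0\<close>.\<close>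
lemma deriv_nonpos:
  assumes t: "0 \<le> t" "t < R"
  shows "v' t \<le> 0"
proof -
  have "t ^ (n - 1) * v' t \<le> 0 ^ (n - 1) * v' 0"
  proof (rule DERIV_nonpos_imp_nonincreasing[OF t(1)])
    fix x assume x: "0 \<le> x" "x \<le> t"
    have "((\<lambda>x. x ^ (n - 1) * v' x) has_real_derivative
          real (n - 1) * x ^ (n - 2) * v' x + x ^ (n - 1) * v'' x) (at x)"
      using has_deriv'[of x] x t by (auto intro!: derivative_eq_intros simp: numeral_2_eq_2)
    moreover have "real (n - 1) * x ^ (n - 2) * v' x + x ^ (n - 1) * v'' x \<le> 0"
    proof (cases "x = 0")
      case True
      then show ?thesis using dim_ge_3 deriv_at_0 by (simp add: power_0_left)
    next
      case False
      with x t have "real (n - 1) * x ^ (n - 2) * v' x + x ^ (n - 1) * v'' x = - (x ^ (n - 1) * v x powr p)"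
        using dim_ge_3 unfolding power_dim_split(1) by (simp add: second_deriv_eq of_nat_diff field_simps)
      then show ?thesis using x by simp
    qed
    ultimately show "\<exists>y. ((\<lambda>x. x ^ (n - 1) * v' x) has_real_derivative y) (at x) \<and> y \<le> 0"
      by blast
  qed
  then have nonpos: "t ^ (n - 1) * v' t \<le> 0"
    using deriv_at_0 by simp
  show ?thesis
  proof (cases "t = 0")
    case False
    with t have "0 < t ^ (n - 1)" by simp
    with nonpos show ?thesis by (simp add: mult_le_0_iff)
  qed (simp add: deriv_at_0)
qed

definition pohozaev :: "real \<Rightarrow> real" where
  "pohozaev t = (real n - 2) / real n * t ^ n * v t powr (p + 1)
     + (real n - 2) * t ^ (n - 1) * v t * v' t + t ^ n * (v' t)\<^sup>2"

text \<open>By the ODE the derivative of the Pohozaev function is \<open>(n + 2 - (n-2) p)/n t^n v^p (-v')\<close>,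
  which is nonnegative exactly in the subcritical range.\<close>
lemma pohozaev_nonneg:
  assumes subcritical: "p < (real n + 2) / (real n - 2)" and t: "0 \<le> t" "t < R"
  shows "0 \<le> pohozaev t"
proof -
  have "pohozaev 0 \<le> pohozaev t"
  proof (rule DERIV_nonneg_imp_nondecreasing[OF t(1)])
    fix x assume x: "0 \<le> x" "x \<le> t"
    define N where "N = real n"
    have N3: "N \<ge> 3" using dim_ge_3 by (simp add: N_def)
    have vx: "v x > 0" using positive x t by simp
    have rn1: "real (n - Suc 0) = N - 1" using dim_ge_3 by (simp add: N_def of_nat_diff)
    define D where "D = (N - 2) / N * (N * x^(n - 1) * v x powr (p+1) + x^n * ((p+1) * v x powr p * v' x))
        + (N - 2) * ((N-1) * x^(n-2) * v x * v' x + x^(n-1) * v' x * v' x + x^(n-1) * v x * v'' x)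
        + (N * x^(n-1) * (v' x)\<^sup>2 + x^n * (2 * v' x * v'' x))"
    have "(pohozaev has_real_derivative D) (at x)"
      unfolding pohozaev_def D_def using has_deriv[of x] has_deriv'[of x] x t vx dim_ge_3
      apply (intro derivative_eq_intros)
      apply (auto simp: rn1 N_def power2_eq_square numeral_2_eq_2)
      apply (simp add: field_simps)
      apply (simp add: algebra_simps)
      done
    moreover have "0 \<le> D"
    proof (cases "x = 0")
      case True then show ?thesis using dim_ge_3 by (simp add: D_def deriv_at_0 power_0_left)
    next
      case False
      then have xp: "x > 0" using x by simp
      have P: "v x powr (p+1) = v x powr p * v x" "v x powr (1+p) = v x powr p * v x"
        using vx by (simp_all add: powr_add)
      have v'': "v'' x = - (v x powr p) - (N - 1) * v' x / x"
        using second_deriv_eq xp x t by (simp add: N_def)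
      have "D = (N + 2 - (N - 2) * p) / N * (x^n * v x powr p) * (- v' x)"
        using xp N3 unfolding D_def power_dim_split
        by (simp add: v'' P field_simps power2_eq_square)
      also have "\<dots> \<ge> 0"
      proof -
        have "(N - 2) * p < N + 2" using subcritical N3 by (simp add: N_def pos_less_divide_eq mult.commute)
        then have "(N + 2 - (N - 2) * p) / N \<ge> 0" using N3 by simp
        moreover have "- v' x \<ge> 0" using deriv_nonpos[of x] x t by simp
        moreover have "x^n * v x powr p \<ge> 0" using xp by simp
        ultimately show ?thesis by (metis mult_nonneg_nonneg)
      qed
      finally show ?thesis .
    qed
    ultimately show "\<exists>y. (pohozaev has_real_derivative y) (at x) \<and> 0 \<le> y" by blast
  qed
  moreover have "pohozaev 0 = 0" using dim_ge_3 by (simp add: pohozaev_def power_0_left)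
  ultimately show ?thesis by simp
qed

definition ratio :: "real \<Rightarrow> real" where
  "ratio t = - v' t / (t * v t powr (real n / (real n - 2)))"

text \<open>The numerator of \<open>ratio'\<close> is a positive multiple of the Pohozaev function.\<close>
lemma ratio_mono:
  assumes subcritical: "p < (real n + 2) / (real n - 2)" and st: "0 < s" "s \<le> t" "t < R"
  shows "ratio s \<le> ratio t"
proof (rule DERIV_nonneg_imp_nondecreasing[OF st(2)])
  fix x assume x: "s \<le> x" "x \<le> t"
  have xp: "x > 0" and xR: "x < R" using x st by auto
  define N where "N = real n"
  define g where "g = N / (N - 2)"
  have N3: "N \<ge> 3" using dim_ge_3 by (simp add: N_def)
  have vx: "v x > 0" using positive[of x] xp xR by simp
  define V where "V = v x powr g"
  have V0: "V > 0" using vx by (simp add: V_def)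
  have dV: "((\<lambda>y. v y powr g) has_real_derivative g * v x powr (g - 1) * v' x) (at x)"
    using DERIV_fun_powr[OF has_deriv[of x] vx, of g] xp xR by simp
  have "(ratio has_real_derivative
      ((- v'' x) * (x * V) - (V + x * (g * v x powr (g - 1) * v' x)) * (- v' x)) / (x * V)\<^sup>2) (at x)"
    unfolding ratio_def N_def[symmetric] g_def[symmetric] V_def
    using DERIV_quotient[OF DERIV_minus[OF has_deriv'] DERIV_mult[OF DERIV_ident dV]] xp xR vx
    by (simp add: power2_eq_square ac_simps)
  moreover have "0 \<le> (- v'' x) * (x * V) - (V + x * (g * v x powr (g - 1) * v' x)) * (- v' x)"
  proof -
    define B where "B = x * v x powr p * v x + N * v x * v' x + g * x * (v' x)\<^sup>2"
    have "pohozaev x = (N - 2) / N * x ^ (n - 1) * B"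
      using N3 vx unfolding pohozaev_def B_def g_def N_def[symmetric] power_dim_split
      by (simp add: powr_add field_simps power2_eq_square)
    moreover have "0 \<le> pohozaev x" using pohozaev_nonneg[OF subcritical] xp xR by simp
    moreover have "(N - 2) / N * x ^ (n - 1) > 0" using N3 xp by simp
    ultimately have "B \<ge> 0" by (metis zero_le_mult_iff not_le)
    have v'': "v'' x = - (v x powr p) - (N - 1) * v' x / x"
      using second_deriv_eq xp xR by (simp add: N_def)
    have "v x powr (g - 1) = V / v x" using vx by (simp add: V_def powr_diff)
    then have "(- v'' x) * (x * V) - (V + x * (g * v x powr (g - 1) * v' x)) * (- v' x) = V / v x * B"
      using vx xp unfolding B_def v'' by (simp add: field_simps power2_eq_square)
    with \<open>B \<ge> 0\<close> V0 vx show ?thesis by simp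
  qed
  ultimately show "\<exists>y. (ratio has_real_derivative y) (at x) \<and> 0 \<le> y" by force
qed

lemma ratio_ge_limit:
  assumes subcritical: "p < (real n + 2) / (real n - 2)" and t: "0 < t" "t < R"
  shows "- v'' 0 / v 0 powr (real n / (real n - 2)) \<le> ratio t"
proof (rule tendsto_le[OF _ tendsto_const])
  define g where "g = real n / (real n - 2)"
  have R0: "0 < R" using t by simp
  have "((\<lambda>h. v' h / h) \<longlongrightarrow> v'' 0) (at 0)"
    using has_deriv'[of 0] R0 deriv_at_0 by (simp add: DERIV_def)
  moreover have "((\<lambda>h. v h powr g) \<longlongrightarrow> v 0 powr g) (at 0)"
    using DERIV_isCont[OF has_deriv[of 0]] positive[of 0] R0
    by (auto simp: isCont_def intro!: tendsto_powr)
  ultimately have "((\<lambda>h. - (v' h / h) / v h powr g) \<longlongrightarrow> - v'' 0 / v 0 powr g) (at 0)"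
    using positive[of 0] R0 by (intro tendsto_divide tendsto_minus) simp_all
  then show "((\<lambda>h. - (v' h / h) / v h powr g) \<longlongrightarrow> - v'' 0 / v 0 powr (real n / (real n - 2))) (at_right 0)"
    by (simp add: filterlim_at_split g_def)
  show "\<forall>\<^sub>F h in at_right 0. - (v' h / h) / v h powr g \<le> ratio t"
    unfolding eventually_at_right_field
  proof (intro exI[of _ t] conjI allI impI)
    fix y :: real assume "0 < y" "y < t"
    then show "- (v' y / y) / v y powr g \<le> ratio t"
      using ratio_mono[OF subcritical, of y t] t by (simp add: ratio_def g_def)
  qed (use t in auto)
qed simp

text \<open>Integrates \<open>(v^(-2/(n-2)))' = 2/(n-2) t ratio(t)\<close> against the lower bound on \<open>ratio\<close>.\<close>
lemma profile_powr_lower_bound: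
  assumes subcritical: "p < (real n + 2) / (real n - 2)" and r: "0 \<le> r" "r < R"
  shows "v 0 powr (- 2 / (real n - 2))
           + - v'' 0 / v 0 powr (real n / (real n - 2)) / (real n - 2) * r\<^sup>2
         \<le> v r powr (- 2 / (real n - 2))"
proof -
  define N where "N = real n"
  define L where "L = - v'' 0 / v 0 powr (N / (N - 2))"
  define e where "e = - 2 / (N - 2)"
  have N3: "N \<ge> 3" using dim_ge_3 by (simp add: N_def)
  define h where "h x = v x powr e - L / (N - 2) * x\<^sup>2" for x
  have "h 0 \<le> h r"
  proof (rule DERIV_nonneg_imp_nondecreasing[OF r(1)])
    fix x assume x: "0 \<le> x" "x \<le> r"
    have xR: "x < R" using x r by simp
    have vx: "v x > 0" using positive[of x] x xR by simp
    have "(h has_real_derivative e * v x powr (e - 1) * v' x - L / (N - 2) * (2 * x)) (at x)"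
      unfolding h_def using has_deriv[of x] x xR vx N3
      by (auto intro!: derivative_eq_intros)
    moreover have "0 \<le> e * v x powr (e - 1) * v' x - L / (N - 2) * (2 * x)"
    proof (cases "x = 0")
      case True then show ?thesis by (simp add: deriv_at_0)
    next
      case False
      then have xp: "x > 0" using x by simp
      have "e - 1 = - (N / (N - 2))" using N3 unfolding e_def by (simp add: field_simps)
      then have "e * v x powr (e - 1) * v' x = 2 / (N - 2) * x * ratio x"
        using xp vx N3 unfolding ratio_def N_def[symmetric] by (simp add: powr_minus e_def field_simps)
      moreover have "L \<le> ratio x"
        using ratio_ge_limit[OF subcritical xp xR] by (simp add: L_def N_def)
      ultimately show ?thesis
        using xp N3 by (simp add: field_simps mult_left_mono)
    qed
    ultimately show "\<exists>y. (h has_real_derivative y) (at x) \<and> 0 \<le> y" by blast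
  qed
  then show ?thesis by (simp add: h_def L_def e_def N_def)
qed

lemma profile_bound:
  assumes subcritical: "p < (real n + 2) / (real n - 2)"
    and ode_at_0: "- (real n * v'' 0) = v 0 powr p"
    and r: "0 \<le> r" "r < R"
  shows "v r \<le> v 0 / (1 + v 0 powr (p - 1) / (real n * (real n - 2)) * r\<^sup>2) powr ((real n - 2) / 2)"
proof -
  define N where "N = real n"
  define M where "M = v 0"
  define e where "e = - 2 / (N - 2)"
  define c where "c = M powr (p - 1) / (N * (N - 2))"
  have N3: "N \<ge> 3" using dim_ge_3 by (simp add: N_def)
  have M0: "M > 0" using positive[of 0] r by (simp add: M_def)
  have "- v'' 0 / M powr (N / (N - 2)) / (N - 2) = M powr e * M powr (p - 1) / (N * (N - 2))"
  proof -
    have exponent: "e + (p - 1) = p - N / (N - 2)" using N3 unfolding e_def by (simp add: field_simps)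
    have "M powr e * M powr (p - 1) = M powr (e + (p - 1))" by (simp add: powr_add)
    also have "\<dots> = M powr p / M powr (N / (N - 2))" by (simp only: exponent powr_diff)
    finally have "M powr e * M powr (p - 1) = M powr p / M powr (N / (N - 2))" .
    moreover have "- v'' 0 = M powr p / N" using ode_at_0 N3 by (simp add: M_def N_def field_simps)
    ultimately show ?thesis by simp
  qed
  then have lower: "M powr e * (1 + c * r\<^sup>2) \<le> v r powr e"
    using profile_powr_lower_bound[OF subcritical r]
    by (simp add: c_def distrib_left e_def M_def N_def)
  have "0 \<le> c" using N3 by (simp add: c_def)
  then have "0 < M powr e * (1 + c * r\<^sup>2)" using M0 by (simp add: add_pos_nonneg)
  moreover have "- ((N - 2) / 2) \<le> 0" using N3 by simp
  ultimately have "(v r powr e) powr - ((N - 2) / 2) \<le> (M powr e * (1 + c * r\<^sup>2)) powr - ((N - 2) / 2)"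
    using lower powr_mono2' by blast
  moreover have "e * - ((N - 2) / 2) = 1" using N3 unfolding e_def by (simp add: field_simps)
  ultimately show ?thesis
    using positive[OF r] M0 by (simp add: powr_powr powr_mult c_def powr_minus_divide M_def N_def)
qed

end

section \<open>Reduction of the PDE to the radial ODE\<close>

lemma deriv_deriv_eqI:
  fixes f f' :: "real \<Rightarrow> real"
  assumes "open S" "x \<in> S"
    and "\<And>t. t \<in> S \<Longrightarrow> (f has_real_derivative f' t) (at t)"
    and "(f' has_real_derivative c) (at x)"
  shows "deriv (deriv f) x = c"
proof -
  have "(deriv f has_real_derivative c) (at x)"
    using assms(4,1,2) by (rule has_field_derivative_transform_within_open) (metis DERIV_imp_deriv assms(3))
  then show ?thesis by (rule DERIV_imp_deriv)
qed

lemma first_nodal_radius_le_1: "first_nodal_radius u \<le> 1"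
  unfolding first_nodal_radius_def by (rule cInf_lower) (auto intro: bdd_belowI[of _ 0])

lemma nonzero_below_first_nodal_radius:
  assumes "norm x < first_nodal_radius u"
  shows "u x \<noteq> 0"
proof
  assume "u x = 0"
  moreover have "x \<in> ball 0 1" using assms first_nodal_radius_le_1[of u] by simp
  ultimately have "first_nodal_radius u \<le> norm x"
    unfolding first_nodal_radius_def by (intro cInf_lower) (auto intro: bdd_belowI[of _ 0])
  with assms show False by simp
qed

locale radial_profile =
  fixes u :: "'a::euclidean_space \<Rightarrow> real" and e :: 'a and v v' v'' :: "real \<Rightarrow> real"
  assumes radial: "radial_on (cball 0 1) u"
    and e_Basis: "e \<in> Basis"
    and profile: "\<And>t. v t = u (t *\<^sub>R e)"
    and has_deriv: "\<And>t. \<bar>t\<bar> < 1 \<Longrightarrow> (v has_real_derivative v' t) (at t)"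
    and has_deriv': "\<And>t. \<bar>t\<bar> < 1 \<Longrightarrow> (v' has_real_derivative v'' t) (at t)"
begin

lemma radial_eq: "norm x \<le> 1 \<Longrightarrow> norm y = norm x \<Longrightarrow> u y = u x"
  using radial unfolding radial_on_def by (metis mem_cball_0)

lemma profile_eq: "\<bar>t\<bar> \<le> 1 \<Longrightarrow> norm x = \<bar>t\<bar> \<Longrightarrow> u x = v t"
  unfolding profile using e_Basis by (intro radial_eq) auto

lemma deriv_at_0: "v' 0 = 0"
proof -
  have "((\<lambda>t. v (- t)) has_real_derivative - v' 0) (at 0)"
    using DERIV_chain2[OF has_deriv DERIV_minus[OF DERIV_ident], of 0] by simp
  moreover have "v (- t) = v t" if "t \<in> ball 0 1" for t
  proof -
    have "u (t *\<^sub>R e) = v (- t)" using that e_Basis by (intro profile_eq) auto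
    then show ?thesis by (metis profile)
  qed
  ultimately have "(v has_real_derivative - v' 0) (at 0)"
    using has_field_derivative_transform_within_open[of "\<lambda>t. v (- t)" _ 0 "ball 0 1" v] by simp
  moreover have "(v has_real_derivative v' 0) (at 0)" using has_deriv[of 0] by simp
  ultimately have "v' 0 = - v' 0" by (rule DERIV_unique[rotated])
  then show ?thesis by linarith
qed

lemma laplacian_at_0: "laplacian u 0 = real DIM('a) * v'' 0"
proof -
  have "deriv (deriv (\<lambda>s. u (0 + s *\<^sub>R b))) 0 = v'' 0" if b: "b \<in> Basis" for b
  proof (rule deriv_deriv_eqI[OF open_ball])
    fix t :: real assume t: "t \<in> ball 0 1"
    show "((\<lambda>s. u (0 + s *\<^sub>R b)) has_real_derivative v' t) (at t)"
    proof (rule has_field_derivative_transform_within_open[OF has_deriv open_ball t])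
      show "\<bar>t\<bar> < 1" using t by simp
      show "v s = u (0 + s *\<^sub>R b)" if "s \<in> ball 0 1" for s
        using that b by (intro profile_eq[symmetric]) auto
    qed
  next
    show "(v' has_real_derivative v'' 0) (at 0)" using has_deriv'[of 0] by simp
  qed simp
  then show ?thesis by (simp add: laplacian_def)
qed

lemma deriv2_along_ray:
  assumes r: "0 < r" "r < 1"
  shows "deriv (deriv (\<lambda>s. u (r *\<^sub>R e + s *\<^sub>R e))) 0 = v'' r"
proof (rule deriv_deriv_eqI[of "{s. \<bar>r + s\<bar> < 1}"])
  show "open {s. \<bar>r + s\<bar> < 1}" by (intro open_Collect_less continuous_intros)
  have shift: "((\<lambda>s. r + s) has_real_derivative 1) (at t)" for t :: real
    by (auto intro!: derivative_eq_intros)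
  have "(\<lambda>s. u (r *\<^sub>R e + s *\<^sub>R e)) = (\<lambda>s. v (r + s))"
    by (simp add: profile scaleR_add_left)
  then show "((\<lambda>s. u (r *\<^sub>R e + s *\<^sub>R e)) has_real_derivative v' (r + t)) (at t)"
    if "t \<in> {s. \<bar>r + s\<bar> < 1}" for t
    using DERIV_chain2[where g="\<lambda>s. r + s", OF has_deriv shift] that by simp
  show "((\<lambda>t. v' (r + t)) has_real_derivative v'' r) (at 0)"
    using DERIV_chain2[where g="\<lambda>s. r + s", OF has_deriv' shift, of 0] r by simp
qed (use r in simp)

text \<open>Off the ray \<open>u(r e + s b) = v(sqrt(r^2 + s^2))\<close>, whose second derivative at \<open>s = 0\<close> is \<open>v'(r)/r\<close>.\<close>
lemma deriv2_across_ray: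
  assumes r: "0 < r" "r < 1" and b: "b \<in> Basis" "b \<noteq> e"
  shows "deriv (deriv (\<lambda>s. u (r *\<^sub>R e + s *\<^sub>R b))) 0 = v' r / r"
proof -
  define \<rho> where "\<rho> s = sqrt (r\<^sup>2 + s\<^sup>2)" for s
  have d\<rho>: "(\<rho> has_real_derivative s / \<rho> s) (at s)" for s
  proof -
    have "r\<^sup>2 + s\<^sup>2 > 0" using r by (simp add: add_pos_nonneg)
    then show ?thesis unfolding \<rho>_def
      by (auto intro!: derivative_eq_intros simp: power2_eq_square divide_simps)
  qed
  have \<rho>0: "\<rho> 0 = r" using r by (simp add: \<rho>_def)
  define S where "S = {s. r\<^sup>2 + s\<^sup>2 < 1}"
  show ?thesis
  proof (rule deriv_deriv_eqI[of S])
    show "open S" unfolding S_def by (intro open_Collect_less continuous_intros)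
    show "0 \<in> S" using r by (simp add: S_def power_less_one_iff)
    show "((\<lambda>s. u (r *\<^sub>R e + s *\<^sub>R b)) has_real_derivative v' (\<rho> t) * (t / \<rho> t)) (at t)"
      if t: "t \<in> S" for t
    proof (rule has_field_derivative_transform_within_open[OF _ \<open>open S\<close> t])
      have "\<bar>\<rho> t\<bar> < 1" using t by (simp add: S_def \<rho>_def)
      then show "((\<lambda>s. v (\<rho> s)) has_real_derivative v' (\<rho> t) * (t / \<rho> t)) (at t)"
        by (rule DERIV_chain2[OF has_deriv d\<rho>])
      show "v (\<rho> s) = u (r *\<^sub>R e + s *\<^sub>R b)" if "s \<in> S" for s
      proof (rule profile_eq[symmetric])
        show "\<bar>\<rho> s\<bar> \<le> 1" using that by (simp add: S_def \<rho>_def)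
        show "norm (r *\<^sub>R e + s *\<^sub>R b) = \<bar>\<rho> s\<bar>"
          using b e_Basis by (simp add: \<rho>_def norm_eq_sqrt_inner inner_add_left inner_add_right
              inner_Basis power2_eq_square)
      qed
    qed
    have "((\<lambda>t. v' (\<rho> t)) has_real_derivative v'' r * (0 / r)) (at 0)"
      using DERIV_chain2[OF has_deriv' d\<rho>, of 0] r \<rho>0 by simp
    moreover have "((\<lambda>t. t / \<rho> t) has_real_derivative 1 / r) (at 0)"
      using DERIV_quotient[OF DERIV_ident d\<rho>, of 0] r \<rho>0 by (simp add: power2_eq_square)
    ultimately show "((\<lambda>t. v' (\<rho> t) * (t / \<rho> t)) has_real_derivative v' r / r) (at 0)"
      using DERIV_mult \<rho>0 r by fastforce
  qed
qed

lemma laplacian_on_ray: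
  assumes r: "0 < r" "r < 1"
  shows "laplacian u (r *\<^sub>R e) = v'' r + (real DIM('a) - 1) * v' r / r"
proof -
  have "laplacian u (r *\<^sub>R e) = deriv (deriv (\<lambda>s. u (r *\<^sub>R e + s *\<^sub>R e))) 0
      + (\<Sum>b\<in>Basis - {e}. deriv (deriv (\<lambda>s. u (r *\<^sub>R e + s *\<^sub>R b))) 0)"
    unfolding laplacian_def using sum.remove[OF finite_Basis e_Basis] by simp
  also have "\<dots> = v'' r + (\<Sum>b\<in>Basis - {e}. v' r / r)"
    using deriv2_along_ray[OF r] deriv2_across_ray[OF r] by simp
  also have "\<dots> = v'' r + (real DIM('a) - 1) * v' r / r"
    using e_Basis by (simp add: of_nat_diff)
  finally show ?thesis .
qed

lemma profile_pos_below_first_nodal_radius: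
  assumes "0 < v 0" "0 \<le> t" "t < first_nodal_radius u"
  shows "0 < v t"
proof (rule ccontr)
  assume "\<not> 0 < v t"
  moreover have "isCont v s" if "0 \<le> s" "s \<le> t" for s
    using that assms first_nodal_radius_le_1[of u] by (intro DERIV_isCont[OF has_deriv]) simp
  ultimately obtain s where s: "0 \<le> s" "s \<le> t" "v s = 0"
    using IVT2[of v t 0 0] assms by force
  have "norm (s *\<^sub>R e) < first_nodal_radius u" using s assms e_Basis by simp
  then have "v s \<noteq> 0" unfolding profile by (rule nonzero_below_first_nodal_radius)
  with s show False by simp
qed

lemma lane_emden_ode_below_first_nodal_radius:
  assumes dim: "DIM('a) \<ge> 3"
    and pde: "\<And>x. x \<in> ball 0 1 \<Longrightarrow> - laplacian u x = \<bar>u x\<bar> powr (p - 1) * u x"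
    and pos: "0 < u 0"
  shows "radial_lane_emden_ode DIM('a) p (first_nodal_radius u) v v' v''"
proof
  have R1: "first_nodal_radius u \<le> 1" by (rule first_nodal_radius_le_1)
  have v0: "0 < v 0" using pos by (simp add: profile)
  show "(v has_real_derivative v' t) (at t)" "(v' has_real_derivative v'' t) (at t)"
    if "0 \<le> t" "t < first_nodal_radius u" for t
    using that R1 has_deriv has_deriv' by simp_all
  show "0 < v t" if "0 \<le> t" "t < first_nodal_radius u" for t
    using profile_pos_below_first_nodal_radius[OF v0 that] .
  show "v'' t + (real DIM('a) - 1) * v' t / t = - (v t powr p)"
    if t: "0 < t" "t < first_nodal_radius u" for t
  proof -
    have "0 < v t" using profile_pos_below_first_nodal_radius[OF v0] t by simp
    moreover have "t *\<^sub>R e \<in> ball 0 1" using t R1 e_Basis by simp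
    ultimately have "- laplacian u (t *\<^sub>R e) = v t powr p"
      using pde[of "t *\<^sub>R e"] by (simp add: profile powr_diff)
    then show ?thesis using laplacian_on_ray[of t] t R1 by simp
  qed
qed (use dim deriv_at_0 in auto)

lemma lane_emden_ode_at_0:
  assumes "- laplacian u 0 = \<bar>u 0\<bar> powr (p - 1) * u 0" "0 < u 0"
  shows "- (real DIM('a) * v'' 0) = v 0 powr p"
  using assms by (simp add: laplacian_at_0 profile powr_diff)

end

lemma C2_on_radial_profile:
  fixes u :: "'a::euclidean_space \<Rightarrow> real"
  assumes "C2_on (ball 0 1) u" "radial_on (cball 0 1) u" "e \<in> Basis"
  obtains v' v'' where "radial_profile u e (\<lambda>t. u (t *\<^sub>R e)) v' v''"
proof -
  obtain Du :: "'a \<Rightarrow> ('a \<Rightarrow>\<^sub>L real)" and D2u :: "'a \<Rightarrow> ('a \<Rightarrow>\<^sub>L ('a \<Rightarrow>\<^sub>L real))"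
    where D: "\<And>x. x \<in> ball 0 1 \<Longrightarrow> (u has_derivative blinfun_apply (Du x)) (at x) \<and>
                       (Du has_derivative blinfun_apply (D2u x)) (at x)"
    using assms(1) unfolding C2_on_def by blast
  have line: "((\<lambda>t. t *\<^sub>R e) has_derivative (\<lambda>h. h *\<^sub>R e)) (at t)" for t :: real
    by (auto intro!: derivative_eq_intros)
  show ?thesis
  proof (rule that, unfold_locales)
    fix t :: real assume t: "\<bar>t\<bar> < 1"
    then have x: "t *\<^sub>R e \<in> ball 0 1" using assms(3) by simp
    have "((\<lambda>t. u (t *\<^sub>R e)) has_derivative (\<lambda>h. Du (t *\<^sub>R e) (h *\<^sub>R e))) (at t)"
      using has_derivative_compose[OF line, of u] D[OF x] by (simp add: o_def)
    then show "((\<lambda>t. u (t *\<^sub>R e)) has_real_derivative Du (t *\<^sub>R e) e) (at t)"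
      unfolding has_field_derivative_def
      by (rule has_derivative_eq_rhs) (auto simp: blinfun.scaleR_right fun_eq_iff)
    have "((\<lambda>t. Du (t *\<^sub>R e)) has_derivative (\<lambda>h. D2u (t *\<^sub>R e) (h *\<^sub>R e))) (at t)"
      using has_derivative_compose[OF line, of Du] D[OF x] by (simp add: o_def)
    then have "((\<lambda>t. Du (t *\<^sub>R e) e) has_derivative (\<lambda>h. D2u (t *\<^sub>R e) (h *\<^sub>R e) e)) (at t)"
      by (auto intro!: derivative_eq_intros)
    then show "((\<lambda>t. Du (t *\<^sub>R e) e) has_real_derivative D2u (t *\<^sub>R e) e e) (at t)"
      unfolding has_field_derivative_def
      by (rule has_derivative_eq_rhs) (auto simp: blinfun.scaleR_right blinfun.scaleR_left fun_eq_iff)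
  qed (use assms in auto)
qed

theorem proposition3p5:
  fixes u :: "'a::euclidean_space \<Rightarrow> real" and p :: real and m :: nat
  assumes dim: "DIM('a) \<ge> 3"
    and m: "m \<ge> 1"
    and p: "1 < p" "p < (real DIM('a) + 2) / (real DIM('a) - 2)"
    and sol: "lane_emden_dirichlet_sol p u"
    and rad: "radial_on (cball 0 1) u"
    and nodal: "finite (nodal_regions u)" "card (nodal_regions u) = m"
    and pos: "u 0 > 0"
  shows "\<forall>x. norm x < first_nodal_radius u \<longrightarrow>
           \<bar>u x\<bar> \<le> u 0 / (1 + (u 0) powr (p - 1) / (real DIM('a) * (real DIM('a) - 2)) * (norm x)\<^sup>2)
                         powr ((real DIM('a) - 2) / 2)"
proof (intro allI impI)
  fix x :: 'a assume x: "norm x < first_nodal_radius u"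
  obtain e :: 'a where e: "e \<in> Basis" using nonempty_Basis by blast
  from sol have C2: "C2_on (ball 0 1) u"
    and pde: "\<And>x. x \<in> ball 0 1 \<Longrightarrow> - laplacian u x = \<bar>u x\<bar> powr (p - 1) * u x"
    unfolding lane_emden_dirichlet_sol_def by auto
  obtain v' v'' where "radial_profile u e (\<lambda>t. u (t *\<^sub>R e)) v' v''"
    using C2_on_radial_profile[OF C2 rad e] .
  then interpret radial_profile u e "\<lambda>t. u (t *\<^sub>R e)" v' v'' .
  interpret ode: radial_lane_emden_ode "DIM('a)" p "first_nodal_radius u" "\<lambda>t. u (t *\<^sub>R e)" v' v''
    using lane_emden_ode_below_first_nodal_radius[OF dim pde pos] .
  have "u x = u (norm x *\<^sub>R e)"
    using x first_nodal_radius_le_1[of u] by (intro profile_eq) auto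
  moreover have "0 < u (norm x *\<^sub>R e)" using ode.positive x by simp
  moreover have "u (norm x *\<^sub>R e) \<le> u 0 / (1 + (u 0) powr (p - 1) / (real DIM('a) * (real DIM('a) - 2)) * (norm x)\<^sup>2)
                         powr ((real DIM('a) - 2) / 2)"
    using ode.profile_bound[OF p(2) lane_emden_ode_at_0[OF pde]] pos x by simp
  ultimately show "\<bar>u x\<bar> \<le> u 0 / (1 + (u 0) powr (p - 1) / (real DIM('a) * (real DIM('a) - 2)) * (norm x)\<^sup>2)
                         powr ((real DIM('a) - 2) / 2)"
    by simp
qed

end
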